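(* Let $P_6(x,y,s)=s-(x+y+1)\big(\frac1x+\frac1y+1\big)$ and $V(P_6)=\{(x,y,s)\in(\mathbb{C}^\times)^3 : P_6(x,y,s)=0\}$. The map $(x,y,s)\mapsto s$ restricts to a fibration of the Deninger cycle $\{(x,y,s)\in V(P_6) : |x|=|y|=1,\ |s|>1\}\setminus\{(1,1,9)\}$ above the interval $(1,9)$. *)

theory Defs
  imports "HOL-Analysis.Analysis"
begin

definition P6 :: "complex \<Rightarrow> complex \<Rightarrow> complex \<Rightarrow> complex" where
  "P6 x y s = s - (x + y + 1) * (1 / x + 1 / y + 1)"

definition V_P6 :: "(complex \<times> complex \<times> complex) set" where
  "V_P6 = {(x, y, s). x \<noteq> 0 \<and> y \<noteq> 0 \<and> s \<noteq> 0 \<and> P6 x y s = 0}"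

definition deninger_cycle :: "(complex \<times> complex \<times> complex) set" where
  "deninger_cycle =
     {(x, y, s) \<in> V_P6. cmod x = 1 \<and> cmod y = 1 \<and> cmod s > 1} - {(1, 1, 9)}"

definition fibration_over ::
  "('a::topological_space \<Rightarrow> 'b::topological_space) \<Rightarrow> 'a set \<Rightarrow> 'b set \<Rightarrow> bool" where
  "fibration_over p E B \<longleftrightarrow>
     p ` E = B \<and> continuous_on E p \<and>
     (\<forall>b\<in>B. \<exists>U (F :: 'a set) h k.
        openin (top_of_set B) U \<and> b \<in> U \<and>
        homeomorphism (E \<inter> p -` U) (U \<times> F) h k \<and>
        (\<forall>z\<in>E \<inter> p -` U. fst (h z) = p z))"

end

(*
  On the torus |x| = |y| = 1 we have 1/x = cnj x, so P6 x y s = 0 forces s = |1 + x + y|^2,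
  which for x = e^(ia), y = e^(ib) is 3 + 2 cos a + 2 cos b + 2 cos (a - b). Since
  s - 1 = 8 cos (a/2) cos (b/2) cos ((a - b)/2), the condition s > 1 cuts out the open hexagon
  |a|, |b|, |a - b| < pi of angle pairs, and the removed point (1, 1, 9) is its centre; so the
  cycle is homeomorphic to the punctured hexagon. Along each ray from the centre s decreases
  strictly from 9 to 1, hence w \<mapsto> s(w) w/|w| maps the punctured hexagon bijectively onto the
  annulus 1 < |v| < 9, homeomorphically by invariance of domain. Polar coordinates on the annulus
  then trivialise the cycle globally over (1, 9), with a circle as fibre.
*)

theory Submission
  imports Defs
begin

lemma mult_sin_self_nonneg:
  fixes x :: real
  assumes "\<bar>x\<bar> < pi"
  shows "0 \<le> x * sin x" and "x \<noteq> 0 \<Longrightarrow> 0 < x * sin x"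
proof -
  have pos: "0 < x * sin x" if "x \<noteq> 0"
  proof (cases "x > 0")
    case True
    then show ?thesis
      using assms sin_gt_zero[of x] by simp
  next
    case False
    then have "0 < sin (- x)"
      using assms \<open>x \<noteq> 0\<close> by (intro sin_gt_zero) auto
    then show ?thesis
      using False \<open>x \<noteq> 0\<close> by (simp add: mult_neg_neg)
  qed
  then show "x \<noteq> 0 \<Longrightarrow> 0 < x * sin x" .
  show "0 \<le> x * sin x"
    using pos by (cases "x = 0") auto
qed

lemma cos_sum_triple_eq_prod:
  fixes p q :: real
  shows "1 + cos (2*p) + cos (2*q) + cos (2*p - 2*q) = 4 * cos p * cos q * cos (p - q)"
proof -
  have "cos (2*p - 2*q) = 2 * (cos (p - q))\<^sup>2 - 1"
    using cos_double_cos[of "p - q"] by (simp add: algebra_simps)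
  moreover have "cos (2*p) + cos (2*q) = 2 * cos (p + q) * cos (p - q)"
    using cos_add[of "p + q" "p - q"] cos_diff[of "p + q" "p - q"] by (simp add: algebra_simps)
  ultimately have "1 + cos (2*p) + cos (2*q) + cos (2*p - 2*q)
      = 2 * cos (p - q) * (cos (p + q) + cos (p - q))"
    by (simp add: power2_eq_square algebra_simps)
  also have "cos (p + q) + cos (p - q) = 2 * cos p * cos q"
    by (simp add: cos_add cos_diff)
  finally show ?thesis
    by simp
qed

lemma cos_half_eq_0_if_abs_eq_pi:
  fixes x :: real
  assumes "\<bar>x\<bar> = pi"
  shows "cos (x / 2) = 0"
proof -
  have "x = pi \<or> x = - pi"
    using assms by auto
  then show ?thesis
    by auto
qed

lemma cos_nonpos_if_abs_ge_pi_half: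
  fixes x :: real
  assumes "pi / 2 \<le> \<bar>x\<bar>" "\<bar>x\<bar> \<le> pi"
  shows "cos x \<le> 0"
proof -
  have "0 \<le> cos (pi - \<bar>x\<bar>)"
    using assms by (intro cos_ge_zero) auto
  then show ?thesis
    by simp
qed

lemma Arg_neq_pi_imp_notin_nonpos_Reals:
  assumes "z \<noteq> 0" "Arg z \<noteq> pi"
  shows "z \<notin> \<real>\<^sub>\<le>\<^sub>0"
  using assms by (auto simp: complex_nonpos_Reals_iff Arg_eq_pi complex_eq_iff)

lemma trivial_bundle_imp_fibration_over:
  fixes p :: "'a::topological_space \<Rightarrow> 'b::topological_space" and F :: "'a set"
  assumes trivialisation: "homeomorphism E (B \<times> F) h k"
    and projection: "\<And>z. z \<in> E \<Longrightarrow> fst (h z) = p z"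
    and "F \<noteq> {}"
  shows "fibration_over p E B"
proof -
  have "p ` E = fst ` h ` E"
    using projection by (force simp: image_image)
  then have image: "p ` E = B"
    using homeomorphism_image1[OF trivialisation] \<open>F \<noteq> {}\<close> by simp
  have "continuous_on E p"
    using continuous_on_fst[OF homeomorphism_cont1[OF trivialisation]] projection
    by (rule continuous_on_eq)
  moreover have "E \<inter> p -` B = E"
    using image by blast
  ultimately show ?thesis
    unfolding fibration_over_def using image trivialisation projection
    by (intro conjI ballI exI[of _ B] exI[of _ F] exI[of _ h] exI[of _ k]) simp_all
qed

text \<open>An angle pair (a, b) is encoded as the complex number a + b i.\<close>


definition s_of_angles :: "complex \<Rightarrow> real" where
  "s_of_angles w = 3 + 2 * cos (Re w) + 2 * cos (Im w) + 2 * cos (Re w - Im w)"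

lemma s_of_angles_eq_sum_squares:
  "s_of_angles w = (cos (Re w) + cos (Im w) + 1)\<^sup>2 + (sin (Re w) + sin (Im w))\<^sup>2"
proof -
  have "sin x * sin x + cos x * cos x = 1" for x :: real
    by (metis sin_cos_squared_add power2_eq_square)
  from this[of "Re w"] this[of "Im w"] show ?thesis
    unfolding s_of_angles_def cos_diff power2_eq_square by algebra
qed

lemma P6_cis_cis: "P6 (cis (Re w)) (cis (Im w)) s = s - complex_of_real (s_of_angles w)"
proof -
  let ?z = "cis (Re w) + cis (Im w) + 1"
  have inverse_cis: "1 / cis c = cnj (cis c)" for c
    by (simp add: divide_inverse cis_inverse complex_eq_iff)
  have "(cis (Re w) + cis (Im w) + 1) * (1 / cis (Re w) + 1 / cis (Im w) + 1) = ?z * cnj ?z"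
    by (simp add: inverse_cis)
  also have "\<dots> = complex_of_real ((Re ?z)\<^sup>2 + (Im ?z)\<^sup>2)"
    by (rule complex_mult_cnj)
  also have "(Re ?z)\<^sup>2 + (Im ?z)\<^sup>2 = s_of_angles w"
    by (simp add: s_of_angles_eq_sum_squares)
  finally show ?thesis
    unfolding P6_def by simp
qed

lemma s_of_angles_minus_one:
  "s_of_angles w - 1 = 8 * cos (Re w / 2) * cos (Im w / 2) * cos ((Re w - Im w) / 2)"
  using cos_sum_triple_eq_prod[of "Re w / 2" "Im w / 2"]
  unfolding s_of_angles_def by (simp add: diff_divide_distrib)

lemma s_of_angles_0 [simp]: "s_of_angles 0 = 9"
  by (simp add: s_of_angles_def)

definition hexagon :: "complex set" where
  "hexagon = {w. \<bar>Re w\<bar> < pi \<and> \<bar>Im w\<bar> < pi \<and> \<bar>Re w - Im w\<bar> < pi}"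

lemma open_hexagon: "open hexagon"
  unfolding hexagon_def by (intro open_Collect_conj open_Collect_less continuous_intros)

lemma of_real_mult_mem_hexagon:
  assumes "w \<in> hexagon" "0 \<le> t" "t \<le> 1"
  shows "complex_of_real t * w \<in> hexagon"
proof -
  have "t * \<bar>c\<bar> < pi" if "\<bar>c\<bar> < pi" for c
    using that assms mult_left_le_one_le[of "\<bar>c\<bar>" t] by linarith
  then show ?thesis
    using assms by (simp add: hexagon_def abs_mult flip: right_diff_distrib)
qed

lemma s_of_angles_gt_one:
  assumes "w \<in> hexagon"
  shows "s_of_angles w > 1"
proof -
  have cos_pos: "cos (x / 2) > 0" if "\<bar>x\<bar> < pi" for x
    using that by (intro cos_gt_zero_pi) auto
  have "8 * cos (Re w / 2) * cos (Im w / 2) * cos ((Re w - Im w) / 2) > 0"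
    using assms by (auto simp: hexagon_def intro!: mult_pos_pos cos_pos)
  then show ?thesis
    using s_of_angles_minus_one[of w] by linarith
qed

lemma s_of_angles_decreasing_along_ray:
  assumes "u \<noteq> 0" "0 \<le> t1" "t1 < t2"
    and on_hexagon: "\<And>t. t1 < t \<Longrightarrow> t < t2 \<Longrightarrow> complex_of_real t * u \<in> hexagon"
  shows "s_of_angles (complex_of_real t2 * u) < s_of_angles (complex_of_real t1 * u)"
proof (rule DERIV_neg_imp_decreasing_open[OF \<open>t1 < t2\<close>])
  let ?a = "Re u" and ?b = "Im u"
  show "continuous_on {t1..t2} (\<lambda>t. s_of_angles (complex_of_real t * u))"
    unfolding s_of_angles_def by (intro continuous_intros)
  fix t
  assume "t1 < t" "t < t2"
  then have "t > 0" and tu: "\<bar>t * ?a\<bar> < pi" "\<bar>t * ?b\<bar> < pi" "\<bar>t * ?a - t * ?b\<bar> < pi"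
    using assms on_hexagon[of t] by (auto simp: hexagon_def)
  have "t * ?a \<noteq> 0 \<or> t * ?b \<noteq> 0"
    using \<open>u \<noteq> 0\<close> \<open>t > 0\<close> by (auto simp: complex_eq_iff)
  then have "0 < t * ?a * sin (t * ?a) + t * ?b * sin (t * ?b) + (t * ?a - t * ?b) * sin (t * ?a - t * ?b)"
    using mult_sin_self_nonneg[OF tu(1)] mult_sin_self_nonneg[OF tu(2)] mult_sin_self_nonneg[OF tu(3)]
    by force
  then have "0 < t * (?a * sin (t * ?a) + ?b * sin (t * ?b) + (?a - ?b) * sin (t * (?a - ?b)))"
    by (simp add: algebra_simps)
  then have "0 < ?a * sin (t * ?a) + ?b * sin (t * ?b) + (?a - ?b) * sin (t * (?a - ?b))"
    using \<open>t > 0\<close> by (simp add: zero_less_mult_iff)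
  moreover have "((\<lambda>t. s_of_angles (complex_of_real t * u)) has_real_derivative
      - 2 * (?a * sin (t * ?a) + ?b * sin (t * ?b) + (?a - ?b) * sin (t * (?a - ?b)))) (at t)"
    unfolding s_of_angles_def by (auto intro!: derivative_eq_intros simp: algebra_simps)
  ultimately show "\<exists>y. ((\<lambda>t. s_of_angles (complex_of_real t * u)) has_real_derivative y) (at t) \<and> y < 0"
    by force
qed

lemma s_of_angles_less_if_same_direction:
  assumes "w2 \<in> hexagon" "sgn w1 = sgn w2" "cmod w1 < cmod w2"
  shows "s_of_angles w2 < s_of_angles w1"
proof -
  have "w2 \<noteq> 0"
    using assms(3) by auto
  have "s_of_angles w2 = s_of_angles (complex_of_real (cmod w2) * sgn w2)"
    by (simp add: sgn_eq)
  also have "\<dots> < s_of_angles (complex_of_real (cmod w1) * sgn w2)"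
  proof (rule s_of_angles_decreasing_along_ray)
    fix t
    assume "cmod w1 < t" "t < cmod w2"
    moreover have "0 < t"
      using \<open>cmod w1 < t\<close> norm_ge_zero[of w1] by linarith
    ultimately have "0 \<le> t / cmod w2" "t / cmod w2 \<le> 1"
      by (simp_all add: divide_le_eq_1)
    then have "complex_of_real (t / cmod w2) * w2 \<in> hexagon"
      using assms(1) by (rule of_real_mult_mem_hexagon[rotated])
    then show "complex_of_real t * sgn w2 \<in> hexagon"
      by (simp add: sgn_eq)
  qed (use assms \<open>w2 \<noteq> 0\<close> in \<open>auto simp: sgn_zero_iff\<close>)
  also have "\<dots> = s_of_angles w1"
    unfolding assms(2)[symmetric] by (simp add: sgn_eq)
  finally show ?thesis .
qed

lemma ray_leaves_hexagon:
  assumes "u \<noteq> 0"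
  obtains T where "T > 0" "s_of_angles (complex_of_real T * u) = 1"
    "\<And>t. 0 \<le> t \<Longrightarrow> t < T \<Longrightarrow> complex_of_real t * u \<in> hexagon"
proof
  let ?a = "Re u" and ?b = "Im u"
  define M where "M = max \<bar>?a\<bar> (max \<bar>?b\<bar> \<bar>?a - ?b\<bar>)"
  define T where "T = pi / M"
  have "M > 0"
    using assms by (auto simp: M_def complex_eq_iff)
  then show "T > 0"
    by (simp add: T_def)
  have TM: "T * M = pi"
    using \<open>M > 0\<close> by (simp add: T_def)
  have "M = \<bar>?a\<bar> \<or> M = \<bar>?b\<bar> \<or> M = \<bar>?a - ?b\<bar>"
    unfolding M_def max_def by auto
  then have "\<bar>T * ?a\<bar> = pi \<or> \<bar>T * ?b\<bar> = pi \<or> \<bar>T * ?a - T * ?b\<bar> = pi"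
    using TM \<open>T > 0\<close> by (auto simp: abs_mult simp flip: right_diff_distrib)
  then have "8 * cos (T * ?a / 2) * cos (T * ?b / 2) * cos ((T * ?a - T * ?b) / 2) = 0"
    using cos_half_eq_0_if_abs_eq_pi by auto
  moreover have "s_of_angles (complex_of_real T * u) - 1
      = 8 * cos (T * ?a / 2) * cos (T * ?b / 2) * cos ((T * ?a - T * ?b) / 2)"
    using s_of_angles_minus_one[of "complex_of_real T * u"] by simp
  ultimately show "s_of_angles (complex_of_real T * u) = 1"
    by linarith
  fix t
  assume "0 \<le> t" "t < T"
  have "t * \<bar>c\<bar> < pi" if "\<bar>c\<bar> \<le> M" for c
  proof -
    have "t * \<bar>c\<bar> \<le> t * M"
      using that \<open>0 \<le> t\<close> by (rule mult_left_mono)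
    also have "\<dots> < T * M"
      using \<open>t < T\<close> \<open>M > 0\<close> by simp
    finally show ?thesis
      using TM by simp
  qed
  moreover have "\<bar>?a\<bar> \<le> M" "\<bar>?b\<bar> \<le> M" "\<bar>?a - ?b\<bar> \<le> M"
    by (simp_all add: M_def)
  ultimately show "complex_of_real t * u \<in> hexagon"
    using \<open>0 \<le> t\<close> by (simp add: hexagon_def abs_mult flip: right_diff_distrib)
qed

lemma s_of_angles_lt_9:
  assumes "w \<in> hexagon" "w \<noteq> 0"
  shows "s_of_angles w < 9"
  using s_of_angles_decreasing_along_ray[of w 0 1] of_real_mult_mem_hexagon[OF assms(1)] assms(2)
  by simp

definition radial_map :: "complex \<Rightarrow> complex" where
  "radial_map w = complex_of_real (s_of_angles w) * sgn w"

lemma norm_radial_map: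
  assumes "w \<in> hexagon" "w \<noteq> 0"
  shows "cmod (radial_map w) = s_of_angles w"
  using s_of_angles_gt_one[OF assms(1)] assms(2) by (simp add: radial_map_def norm_mult norm_sgn)

lemma inj_on_radial_map: "inj_on radial_map (hexagon - {0})"
proof (rule inj_onI)
  fix w1 w2
  assume w: "w1 \<in> hexagon - {0}" "w2 \<in> hexagon - {0}" "radial_map w1 = radial_map w2"
  then have same_s: "s_of_angles w1 = s_of_angles w2"
    using norm_radial_map[of w1] norm_radial_map[of w2] by auto
  have same_sgn: "sgn w1 = sgn w2"
    using w(3) s_of_angles_gt_one[of w1] w(1) unfolding radial_map_def same_s by simp
  have same_norm: "cmod w1 = cmod w2"
  proof (rule ccontr)
    assume "cmod w1 \<noteq> cmod w2"
    then consider "cmod w1 < cmod w2" | "cmod w2 < cmod w1"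
      by linarith
    then show False
      using s_of_angles_less_if_same_direction[of w2 w1] s_of_angles_less_if_same_direction[of w1 w2]
        w same_s same_sgn by cases auto
  qed
  have "w1 = complex_of_real (cmod w1) * sgn w1"
    by (simp add: sgn_eq)
  also have "\<dots> = complex_of_real (cmod w2) * sgn w2"
    using same_norm same_sgn by simp
  also have "\<dots> = w2"
    by (simp add: sgn_eq)
  finally show "w1 = w2" .
qed

lemma radial_map_image: "radial_map ` (hexagon - {0}) = {v. 1 < cmod v \<and> cmod v < 9}"
proof
  show "radial_map ` (hexagon - {0}) \<subseteq> {v. 1 < cmod v \<and> cmod v < 9}"
    using norm_radial_map s_of_angles_gt_one s_of_angles_lt_9 by force
next
  show "{v. 1 < cmod v \<and> cmod v < 9} \<subseteq> radial_map ` (hexagon - {0})"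
  proof
    fix v
    assume v: "v \<in> {v. 1 < cmod v \<and> cmod v < 9}"
    then have "sgn v \<noteq> 0"
      by (auto simp: sgn_zero_iff)
    then obtain T where "T > 0" and s_T: "s_of_angles (complex_of_real T * sgn v) = 1"
      and inside: "\<And>t. 0 \<le> t \<Longrightarrow> t < T \<Longrightarrow> complex_of_real t * sgn v \<in> hexagon"
      using ray_leaves_hexagon by blast
    have "\<exists>t. 0 \<le> t \<and> t \<le> T \<and> s_of_angles (complex_of_real t * sgn v) = cmod v"
      using v s_T \<open>T > 0\<close>
      by (intro IVT2) (auto simp: s_of_angles_def intro!: continuous_intros)
    then obtain t where t: "0 \<le> t" "t \<le> T" "s_of_angles (complex_of_real t * sgn v) = cmod v"
      by blast
    then have "t \<noteq> 0" "t \<noteq> T"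
      using v s_T by auto
    define w where "w = complex_of_real t * sgn v"
    have "w \<in> hexagon - {0}"
      using inside[of t] t \<open>t \<noteq> 0\<close> \<open>t \<noteq> T\<close> \<open>sgn v \<noteq> 0\<close> by (simp add: w_def)
    have "sgn w = sgn v"
      using t \<open>t \<noteq> 0\<close> by (simp add: w_def sgn_mult sgn_of_real)
    moreover have "s_of_angles w = cmod v"
      using t(3) by (simp add: w_def)
    ultimately have "radial_map w = complex_of_real (cmod v) * sgn v"
      by (simp add: radial_map_def)
    then have "radial_map w = v"
      using \<open>sgn v \<noteq> 0\<close> by (simp add: sgn_eq)
    with \<open>w \<in> hexagon - {0}\<close> show "v \<in> radial_map ` (hexagon - {0})"
      by blast
  qed
qed

lemma radial_map_homeomorphism:
  obtains g where "homeomorphism (hexagon - {0}) {v. 1 < cmod v \<and> cmod v < 9} radial_map g"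
proof -
  have "open (hexagon - {0})"
    using open_hexagon by (simp add: open_Diff)
  moreover have "continuous_on (hexagon - {0}) radial_map"
    unfolding radial_map_def s_of_angles_def by (intro continuous_intros) auto
  ultimately show ?thesis
    using invariance_of_domain_homeomorphism[of "hexagon - {0}" radial_map] inj_on_radial_map
      radial_map_image that by auto
qed

text \<open>The fibre in fibration_over must live in the type of the total space, so the
  unit circle is embedded as its first coordinate.\<close>

definition unit_circle_fibre :: "(complex \<times> complex \<times> complex) set" where
  "unit_circle_fibre = {(u, 0, 0) | u. cmod u = 1}"

lemma annulus_homeomorphism_Times_circle:
  assumes "0 \<le> a"
  shows "homeomorphism {v. a < cmod v \<and> cmod v < b}
           (complex_of_real ` {a<..<b} \<times> unit_circle_fibre)
           (\<lambda>v. (complex_of_real (cmod v), sgn v, 0, 0)) (\<lambda>q. fst q * fst (snd q))"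
proof (rule homeomorphismI)
  show "continuous_on {v. a < cmod v \<and> cmod v < b} (\<lambda>v. (complex_of_real (cmod v), sgn v, 0, 0))"
    using assms by (intro continuous_intros) auto
  show "continuous_on (complex_of_real ` {a<..<b} \<times> unit_circle_fibre) (\<lambda>q. fst q * fst (snd q))"
    by (intro continuous_intros)
  show "(\<lambda>v. (complex_of_real (cmod v), sgn v, 0, 0)) ` {v. a < cmod v \<and> cmod v < b}
      \<subseteq> complex_of_real ` {a<..<b} \<times> unit_circle_fibre"
    using assms by (auto simp: unit_circle_fibre_def norm_sgn)
  show "(\<lambda>q. fst q * fst (snd q)) ` (complex_of_real ` {a<..<b} \<times> unit_circle_fibre)
      \<subseteq> {v. a < cmod v \<and> cmod v < b}"
    using assms by (auto simp: unit_circle_fibre_def norm_mult)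
  show "fst (complex_of_real (cmod v), sgn v, 0, 0) * fst (snd (complex_of_real (cmod v), sgn v, 0, 0)) = v"
    for v
    by (simp add: sgn_eq)
  show "(complex_of_real (cmod (fst q * fst (snd q))), sgn (fst q * fst (snd q)), 0, 0) = q"
    if "q \<in> complex_of_real ` {a<..<b} \<times> unit_circle_fibre" for q
    using that assms by (auto simp: unit_circle_fibre_def norm_mult sgn_mult sgn_of_real sgn_eq)
qed

definition angles :: "complex \<times> complex \<times> complex \<Rightarrow> complex" where
  "angles z = Complex (Arg (fst z)) (Arg (fst (snd z)))"

definition torus_point :: "complex \<Rightarrow> complex \<times> complex \<times> complex" where
  "torus_point w = (cis (Re w), cis (Im w), complex_of_real (s_of_angles w))"

lemma torus_point_in_deninger_cycle:
  assumes "w \<in> hexagon" "w \<noteq> 0"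
  shows "torus_point w \<in> deninger_cycle"
proof -
  have "1 < s_of_angles w" "s_of_angles w < 9"
    using s_of_angles_gt_one s_of_angles_lt_9 assms by auto
  then have "complex_of_real (s_of_angles w) \<noteq> 9"
    by (metis of_real_eq_iff of_real_numeral order_less_irrefl)
  then show ?thesis
    using P6_cis_cis[of w] \<open>1 < s_of_angles w\<close>
    by (auto simp: deninger_cycle_def V_P6_def torus_point_def)
qed

lemma angles_torus_point:
  assumes "w \<in> hexagon"
  shows "angles (torus_point w) = w"
  using assms by (auto simp: hexagon_def angles_def torus_point_def complex_eq_iff intro!: Arg_cis)

lemma hexagon_if_s_of_angles_gt_one:
  assumes "- pi < Re w" "Re w \<le> pi" "- pi < Im w" "Im w \<le> pi" "1 < s_of_angles w"
  shows "w \<in> hexagon"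
proof -
  let ?a = "Re w" and ?b = "Im w"
  have prod_pos: "0 < cos (?a / 2) * cos (?b / 2) * cos ((?a - ?b) / 2)"
    using assms(5) s_of_angles_minus_one[of w] by simp
  then have "?a \<noteq> pi" "?b \<noteq> pi"
    by auto
  then have "\<bar>?a\<bar> < pi" "\<bar>?b\<bar> < pi"
    using assms by auto
  then have "0 < cos (?a / 2)" "0 < cos (?b / 2)"
    by (auto intro!: cos_gt_zero_pi)
  then have "0 < cos ((?a - ?b) / 2)"
    using prod_pos by (metis mult_pos_pos zero_less_mult_pos)
  moreover have "\<bar>(?a - ?b) / 2\<bar> \<le> pi"
    using \<open>\<bar>?a\<bar> < pi\<close> \<open>\<bar>?b\<bar> < pi\<close> by auto
  ultimately have "\<bar>?a - ?b\<bar> < pi"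
    using cos_nonpos_if_abs_ge_pi_half[of "(?a - ?b) / 2"] by force
  with \<open>\<bar>?a\<bar> < pi\<close> \<open>\<bar>?b\<bar> < pi\<close> show ?thesis
    by (simp add: hexagon_def)
qed

lemma angles_of_deninger_cycle:
  assumes "z \<in> deninger_cycle"
  shows "angles z \<in> hexagon - {0}" and "torus_point (angles z) = z"
proof -
  obtain x y s where z: "z = (x, y, s)"
    by (cases z) auto
  have on_cycle: "cmod x = 1" "cmod y = 1" "1 < cmod s" "P6 x y s = 0" "(x, y, s) \<noteq> (1, 1, 9)"
    using assms z by (auto simp: deninger_cycle_def V_P6_def)
  define w where "w = angles z"
  have "x \<noteq> 0" "y \<noteq> 0"
    using on_cycle(1,2) by auto
  moreover have "Re w = Arg x" "Im w = Arg y"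
    by (simp_all add: w_def angles_def z)
  ultimately have x: "cis (Re w) = x" and y: "cis (Im w) = y"
    using on_cycle(1,2) by (simp_all add: cis_Arg sgn_eq)
  have s: "s = complex_of_real (s_of_angles w)"
    using P6_cis_cis[of w s] on_cycle(4) by (simp add: x y)
  moreover have "0 \<le> s_of_angles w"
    by (simp add: s_of_angles_eq_sum_squares)
  ultimately have "1 < s_of_angles w"
    using on_cycle(3) by simp
  moreover have "- pi < Re w" "Re w \<le> pi" "- pi < Im w" "Im w \<le> pi"
    using Arg_bounded by (auto simp: w_def angles_def)
  ultimately have "w \<in> hexagon"
    by (intro hexagon_if_s_of_angles_gt_one)
  moreover have "w \<noteq> 0"
    using on_cycle(5) x y s by auto
  ultimately show "angles z \<in> hexagon - {0}"
    unfolding w_def by simp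
  show "torus_point (angles z) = z"
    unfolding w_def[symmetric] using x y s by (simp add: torus_point_def z)
qed

lemma homeomorphism_angles: "homeomorphism deninger_cycle (hexagon - {0}) angles torus_point"
proof (rule homeomorphismI)
  have "fst z \<notin> \<real>\<^sub>\<le>\<^sub>0" "fst (snd z) \<notin> \<real>\<^sub>\<le>\<^sub>0" if "z \<in> deninger_cycle" for z
  proof -
    have "Arg (fst z) \<noteq> pi" "Arg (fst (snd z)) \<noteq> pi"
      using angles_of_deninger_cycle(1)[OF that] by (auto simp: hexagon_def angles_def)
    moreover have "fst z \<noteq> 0" "fst (snd z) \<noteq> 0"
      using that by (auto simp: deninger_cycle_def V_P6_def)
    ultimately show "fst z \<notin> \<real>\<^sub>\<le>\<^sub>0" "fst (snd z) \<notin> \<real>\<^sub>\<le>\<^sub>0"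
      by (simp_all add: Arg_neq_pi_imp_notin_nonpos_Reals)
  qed
  then show "continuous_on deninger_cycle angles"
    unfolding angles_def by (intro continuous_intros)
  show "continuous_on (hexagon - {0}) torus_point"
    unfolding torus_point_def s_of_angles_def by (intro continuous_intros)
  show "angles ` deninger_cycle \<subseteq> hexagon - {0}"
    using angles_of_deninger_cycle(1) by (rule image_subsetI)
  show "torus_point ` (hexagon - {0}) \<subseteq> deninger_cycle"
    using torus_point_in_deninger_cycle by (auto intro!: image_subsetI)
  show "torus_point (angles z) = z" if "z \<in> deninger_cycle" for z
    using angles_of_deninger_cycle(2)[OF that] .
  show "angles (torus_point w) = w" if "w \<in> hexagon - {0}" for w
    using angles_torus_point that by simp
qed

theorem lemma9p6:
  shows "fibration_over (\<lambda>(x, y, s). s) deninger_cycle (complex_of_real ` {1<..<9})"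
proof -
  obtain g where radial: "homeomorphism (hexagon - {0}) {v. 1 < cmod v \<and> cmod v < 9} radial_map g"
    by (rule radial_map_homeomorphism)
  let ?polar = "\<lambda>v. (complex_of_real (cmod v), sgn v, 0, 0)"
  have polar: "homeomorphism {v. 1 < cmod v \<and> cmod v < 9}
      (complex_of_real ` {1<..<9} \<times> unit_circle_fibre) ?polar (\<lambda>q. fst q * fst (snd q))"
    by (rule annulus_homeomorphism_Times_circle) simp
  have "homeomorphism deninger_cycle (complex_of_real ` {1<..<9} \<times> unit_circle_fibre)
      (?polar \<circ> (radial_map \<circ> angles)) ((torus_point \<circ> g) \<circ> (\<lambda>q. fst q * fst (snd q)))"
    by (rule homeomorphism_compose[OF homeomorphism_compose[OF homeomorphism_angles radial] polar])
  moreover have "fst ((?polar \<circ> (radial_map \<circ> angles)) z) = (\<lambda>(x, y, s). s) z"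
    if "z \<in> deninger_cycle" for z
  proof -
    have "angles z \<in> hexagon" "angles z \<noteq> 0"
      using angles_of_deninger_cycle(1)[OF that] by auto
    moreover have "snd (snd z) = complex_of_real (s_of_angles (angles z))"
      using angles_of_deninger_cycle(2)[OF that] by (metis snd_conv torus_point_def)
    ultimately show ?thesis
      using norm_radial_map[of "angles z"] by (simp add: case_prod_beta)
  qed
  moreover have "(1, 0, 0) \<in> unit_circle_fibre"
    by (simp add: unit_circle_fibre_def)
  ultimately show ?thesis
    by (intro trivial_bundle_imp_fibration_over) auto
qed

end
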